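(* Let $K$ be the irreducible cyclic code of length $n$ over $GF(q)$ with monic irreducible parity-check polynomial $h(x)$ of degree $m$ and order $n\ne q^m-1$. Then the Hamming weight of every codeword of $K$ is a multiple of $d=\gcd(q-1,n)$.
   Context: Let $q>2$ be a prime power. $A_n=GF(q)[x]/(x^n-1)$; Hamming weight of an element = number of nonzero coefficients of its representative of degree $<n$. The order of $h$ is the least $e\ge1$ with $h\mid x^e-1$. $K$ is the ideal of $A_n$ generated by $(x^n-1)/h(x)$. *)

theory Defs
  imports "HOL-Computational_Algebra.Polynomial" "HOL-Library.Cardinality"
begin

definition xn1 :: "nat \<Rightarrow> 'a::comm_ring_1 poly" where
  "xn1 n = monom 1 n - 1"

definition poly_ord :: "'a::comm_ring_1 poly \<Rightarrow> nat" where
  "poly_ord h = (LEAST e. e \<ge> 1 \<and> h dvd xn1 e)"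

definition hamming_weight :: "'a::zero poly \<Rightarrow> nat" where
  "hamming_weight c = card {i. coeff c i \<noteq> 0}"

(* the ideal K of A_n = F[x]/(x^n-1) generated by (x^n-1)/h, each element
   represented by its unique representative of degree < n *)
definition cyclic_code :: "nat \<Rightarrow> 'a::field poly \<Rightarrow> 'a poly set" where
  "cyclic_code n h = {(f * (xn1 n div h)) mod xn1 n | f. True}"

end

theory Submission
  imports Defs "HOL-Computational_Algebra.Polynomial_Factorial"
begin

(* Let q = |F|, d = gcd(q-1, n) and n = d*k.  Since d divides q-1, the
   polynomial x^n - 1 divides (x^k)^(q-1) - 1, which over F factors as the product of
   the factors x^k - g, g ranging over the nonzero elements of F.  The irreducible
   (hence prime) polynomial h divides x^n - 1, so it divides one factor x^k - g with
   g <> 0.  Every codeword c is a multiple of (x^n-1)/h modulo x^n - 1, hence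
   (x^k - g) * c == 0 (mod x^n - 1); comparing coefficients gives c_i = g * c_(i+k)
   for i + k < n.  So c consists of d blocks of length k, each a nonzero multiple of
   the next, and its weight is d times the weight of one block. *)

lemma degree_xn1: "n \<ge> 1 \<Longrightarrow> degree (xn1 n :: 'a::field poly) = n"
  unfolding xn1_def using degree_add_eq_left[of "-1::'a poly" "monom 1 n"]
  by (simp add: degree_monom_eq)

lemma lead_coeff_xn1: "n \<ge> 1 \<Longrightarrow> lead_coeff (xn1 n :: 'a::field poly) = 1"
  by (simp add: degree_xn1) (simp add: xn1_def)

lemma xn1_nonzero: "n \<ge> 1 \<Longrightarrow> xn1 n \<noteq> (0 :: 'a::field poly)"
  by (metis lead_coeff_xn1 leading_coeff_0_iff zero_neq_one)

lemma xn1_dvd_xn1: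
  assumes "a dvd b"
  shows "xn1 a dvd (xn1 b :: 'a::comm_ring_1 poly)"
proof -
  obtain e where "b = a * e" using assms by (elim dvdE)
  then have "xn1 b = (monom 1 a) ^ e - (1 :: 'a poly)"
    by (simp add: xn1_def monom_altdef power_mult)
  also have "\<dots> = xn1 a * sum ((^) (monom 1 a)) {..<e}"
    by (simp add: power_diff_1_eq xn1_def)
  finally show ?thesis by simp
qed

lemma pcompose_xn1: "pcompose (xn1 j) y = (y::'a::comm_ring_1 poly) ^ j - 1"
proof -
  have "pcompose ([:0,1:] ^ j) y = y ^ j"
    by (induction j) (simp_all add: pcompose_mult pcompose_pCons pcompose_1)
  then show ?thesis by (simp add: xn1_def monom_altdef pcompose_diff pcompose_1)
qed

lemma poly_ord_props:
  assumes "\<exists>e\<ge>1. h dvd xn1 e"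
  shows "poly_ord h \<ge> 1" "h dvd xn1 (poly_ord h)"
  using LeastI_ex[OF assms] unfolding poly_ord_def by simp_all

lemma finite_field_pow_card_minus_one:
  fixes c :: "'a::{field,finite}"
  assumes "c \<noteq> 0"
  shows "c ^ (CARD('a) - 1) = 1"
proof -
  define S where "S = UNIV - {0::'a}"
  have "bij_betw (\<lambda>x. c * x) S S"
    unfolding S_def using assms
    by (auto simp: bij_betw_def inj_on_def intro!: image_eqI[where x="x / c" for x])
  then have "prod id S = prod (\<lambda>x. c * x) S"
    using prod.reindex_bij_betw[of "\<lambda>x. c * x" S S id] by simp
  also have "\<dots> = c ^ card S * prod id S" by (simp add: prod.distrib)
  finally have "c ^ card S * prod id S = 1 * prod id S" by simp
  moreover have "prod id S \<noteq> 0" unfolding S_def by simp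
  moreover have "card S = CARD('a) - 1" unfolding S_def by (simp add: card_Diff_singleton)
  ultimately show ?thesis by simp
qed

lemma prod_linear_factors_dvd:
  fixes p :: "'a::field poly"
  assumes "finite A" "\<forall>a\<in>A. poly p a = 0"
  shows "(\<Prod>a\<in>A. [:-a,1:]) dvd p"
  using assms
proof (induction A arbitrary: p rule: finite_induct)
  case empty then show ?case by simp
next
  case (insert a A)
  then obtain r where r: "p = [:-a,1:] * r"
    by (auto simp: poly_eq_0_iff_dvd elim: dvdE)
  have "\<forall>b\<in>A. poly r b = 0"
    using insert.hyps(2) insert.prems by (auto simp: r)
  then have "(\<Prod>a\<in>A. [:-a,1:]) dvd r" using insert.IH by blast
  then have "[:-a,1:] * (\<Prod>a\<in>A. [:-a,1:]) dvd [:-a,1:] * r"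
    by (rule mult_dvd_mono[OF dvd_refl])
  then show ?case using insert.hyps by (simp only: r prod.insert[OF insert.hyps])
qed

lemma card_field_ge_two: "CARD('a::{field,finite}) \<ge> 2"
proof -
  have "card {0::'a, 1} \<le> CARD('a)" by (rule card_mono) simp_all
  then show ?thesis by simp
qed

lemma finite_field_xn1_factorization:
  "xn1 (CARD('a) - 1) = (\<Prod>c\<in>UNIV - {0::'a::{field,finite}}. [:-c,1:])"
  (is "?Q = ?P")
proof -
  have q1: "CARD('a) - 1 \<ge> 1" using card_field_ge_two[where 'a='a] by simp
  have "?P dvd ?Q"
    by (rule prod_linear_factors_dvd)
      (use finite_field_pow_card_minus_one in \<open>auto simp: xn1_def poly_monom\<close>)
  then obtain r where r: "?Q = ?P * r" by (elim dvdE)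
  have lcP: "lead_coeff ?P = 1" unfolding lead_coeff_prod by simp
  have P0: "?P \<noteq> 0" and degP: "degree ?P = CARD('a) - 1"
    by (simp_all add: degree_prod_eq_sum_degree card_Diff_singleton)
  have r0: "r \<noteq> 0" using r xn1_nonzero[OF q1] by auto
  have "degree ?Q = degree ?P + degree r" unfolding r using P0 r0 by (rule degree_mult_eq)
  then have "degree r = 0" using degP degree_xn1[OF q1, where 'a='a] by linarith
  have "lead_coeff ?Q = lead_coeff ?P * lead_coeff r" unfolding r by (rule lead_coeff_mult)
  then have "lead_coeff r = 1" using lcP lead_coeff_xn1[OF q1, where 'a='a] by simp
  with \<open>degree r = 0\<close> have "r = 1" by (metis degree_0_id one_pCons pCons_0_0)
  with r show ?thesis by simp
qed

lemma prime_dvd_pow_card_minus_one: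
  fixes p y :: "'a::{field,finite} poly"
  assumes "prime_elem p" "p dvd y ^ (CARD('a) - 1) - 1"
  shows "\<exists>g. g \<noteq> 0 \<and> p dvd y - [:g:]"
proof -
  have linear: "pcompose [:-c,1:] y = y - [:c:]" for c by (simp add: pcompose_pCons)
  have "y ^ (CARD('a) - 1) - 1 = pcompose (xn1 (CARD('a) - 1)) y" by (simp add: pcompose_xn1)
  also have "\<dots> = (\<Prod>c\<in>UNIV - {0}. y - [:c:])"
    by (simp only: finite_field_xn1_factorization pcompose_prod linear)
  finally have "p dvd prod_mset (image_mset (\<lambda>c. y - [:c:]) (mset_set (UNIV - {0})))"
    using assms(2) by (simp add: prod_unfold_prod_mset)
  then obtain a where "a \<in># image_mset (\<lambda>c. y - [:c:]) (mset_set (UNIV - {0}))" "p dvd a"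
    using prime_elem_dvd_prod_msetE[OF assms(1)] by blast
  then show ?thesis by auto
qed

lemma prime_factor_xn1_dvd_binomial:
  fixes h :: "'a::{field,finite} poly"
  assumes "prime_elem h" "h dvd xn1 n" "n = d * k" "d dvd CARD('a) - 1"
  shows "\<exists>g. g \<noteq> 0 \<and> h dvd monom 1 k - [:g:]"
proof -
  have "n dvd k * (CARD('a) - 1)" using assms(3,4) by (simp add: mult.commute)
  then have "h dvd xn1 (k * (CARD('a) - 1))"
    using assms(2) xn1_dvd_xn1 dvd_trans by blast
  then have "h dvd (monom 1 k) ^ (CARD('a) - 1) - 1"
    by (simp add: xn1_def monom_altdef power_mult)
  then show ?thesis using prime_dvd_pow_card_minus_one[OF assms(1)] by blast
qed

lemma codeword_coeff_eq_0:
  assumes "c \<in> cyclic_code n h" "n \<ge> 1" "i \<ge> n"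
  shows "coeff c i = 0"
proof -
  obtain f where "c = f mod xn1 n" using assms(1) unfolding cyclic_code_def by blast
  then have "c = 0 \<or> degree c < n"
    using degree_mod_less[OF xn1_nonzero[OF assms(2)]] degree_xn1[OF assms(2)] by metis
  then show ?thesis using assms(3) by (auto intro: coeff_eq_0)
qed

lemma codeword_annihilated:
  assumes "c \<in> cyclic_code n h" "h dvd xn1 n" "h dvd p"
  shows "xn1 n dvd p * c"
proof -
  obtain f where c: "c = (f * (xn1 n div h)) mod xn1 n"
    using assms(1) unfolding cyclic_code_def by blast
  obtain u where p: "p = h * u" using assms(3) by (elim dvdE)
  have "p * (f * (xn1 n div h)) = (u * f) * (h * (xn1 n div h))"
    by (simp add: p ac_simps)
  also have "\<dots> = (u * f) * xn1 n" using assms(2) by simp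
  finally have "xn1 n dvd p * (f * (xn1 n div h))" by (metis dvd_triv_right)
  then show ?thesis unfolding c by (simp add: dvd_eq_mod_eq_0 mod_mult_right_eq)
qed

lemma coeff_quasi_periodic:
  fixes c :: "'a::field poly"
  assumes k: "0 < k" "k \<le> n" and c_low: "\<forall>i\<ge>n. coeff c i = 0"
    and dvd: "xn1 n dvd (monom 1 k - [:g:]) * c" and ik: "i + k < n"
  shows "coeff c i = g * coeff c (i + k)"
proof -
  obtain t where t: "(monom 1 k - [:g:]) * c = xn1 n * t" using dvd by (elim dvdE)
  have t_high: "coeff t (i + k) = 0"
  proof (cases "t = 0")
    case False
    have "degree c \<le> n - 1" by (rule degree_le) (use c_low k in auto)
    moreover have "degree (monom 1 k - [:g:] :: 'a poly) \<le> k"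
      by (rule degree_diff_le) (simp_all add: degree_monom_le)
    ultimately have "degree ((monom 1 k - [:g:]) * c) \<le> k + (n - 1)"
      using degree_mult_le[of "monom 1 k - [:g:]" c] by linarith
    moreover have "degree (xn1 n * t) = n + degree t"
      using False k by (simp add: degree_mult_eq xn1_nonzero degree_xn1)
    ultimately have "degree t < k" using t k by simp
    then show ?thesis by (simp add: coeff_eq_0)
  qed simp
  have "coeff ((monom 1 k - [:g:]) * c) (i + k) = coeff (xn1 n * t) (i + k)" by (simp add: t)
  then have "coeff c i - g * coeff c (i + k) = - coeff t (i + k)"
    using ik by (simp add: xn1_def left_diff_distrib coeff_monom_mult)
  then show ?thesis using t_high by simp
qed

lemma hamming_weight_quasi_periodic:
  fixes c :: "'a::field poly"
  assumes n: "n = d * k" and k: "0 < k" and c_low: "\<forall>i\<ge>n. coeff c i = 0"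
    and g: "g \<noteq> 0" and shift: "\<And>i. i + k < n \<Longrightarrow> coeff c i = g * coeff c (i + k)"
  shows "hamming_weight c = d * card {a. a < k \<and> coeff c a \<noteq> 0}"
proof -
  let ?B = "{a. a < k \<and> coeff c a \<noteq> 0}"
  have block: "coeff c (j * k + a) \<noteq> 0 \<longleftrightarrow> coeff c a \<noteq> 0" if "a < k" "j < d" for a j
    using that(2)
  proof (induction j)
    case (Suc j)
    have "Suc (Suc j) * k \<le> d * k" using Suc.prems by (intro mult_le_mono1) simp
    then have "j * k + a + k < n" using \<open>a < k\<close> n by simp
    then have "coeff c (j * k + a) = g * coeff c (Suc j * k + a)"
      using shift by (simp add: add.commute add.left_commute)
    then show ?case using Suc g by simp
  qed simp
  let ?f = "\<lambda>(a, j). j * k + a"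
  have inj: "inj_on ?f (?B \<times> {..<d})"
  proof (rule inj_onI, clarsimp)
    fix a j a' j' assume eq: "j * k + a = j' * k + a'" and "a < k" "a' < k"
    then have "(j * k + a) mod k = (j' * k + a') mod k" "(j * k + a) div k = (j' * k + a') div k"
      by simp_all
    then show "a = a' \<and> j = j'" using \<open>a < k\<close> \<open>a' < k\<close> by simp
  qed
  have support: "{i. coeff c i \<noteq> 0} = ?f ` (?B \<times> {..<d})"
  proof (rule set_eqI, rule iffI)
    fix i assume "i \<in> {i. coeff c i \<noteq> 0}"
    then have ci: "coeff c i \<noteq> 0" by simp
    then have "i < n" using c_low by (meson not_le)
    then have jd: "i div k < d" using n k by (simp add: less_mult_imp_div_less)
    have ik: "i mod k < k" using k by simp
    have "i = (i div k) * k + i mod k" by simp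
    moreover have "coeff c (i mod k) \<noteq> 0" using block[OF ik jd] ci calculation by simp
    ultimately show "i \<in> ?f ` (?B \<times> {..<d})"
      using jd ik by (auto intro!: image_eqI[where x="(i mod k, i div k)"])
  qed (use block in auto)
  have "hamming_weight c = card (?B \<times> {..<d})"
    unfolding hamming_weight_def support by (rule card_image[OF inj])
  then show ?thesis by (simp add: card_cartesian_product)
qed

theorem corollary6:
  fixes h :: "'a::{field,finite} poly" and n m :: nat
  assumes "CARD('a) > 2"
    and "lead_coeff h = 1" and "irreducible h" and "degree h = m"
    and "\<exists>e\<ge>1. h dvd xn1 e"
    and "poly_ord h = n"
    and "n \<noteq> CARD('a) ^ m - 1"
  shows "\<forall>c \<in> cyclic_code n h. gcd (CARD('a) - 1) n dvd hamming_weight c"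
proof
  fix c assume c: "c \<in> cyclic_code n h"
  define d where "d = gcd (CARD('a) - 1) n"
  define k where "k = n div d"
  have n1: "n \<ge> 1" and h_dvd: "h dvd xn1 n" using poly_ord_props[OF assms(5)] assms(6) by auto
  have nk: "n = d * k" unfolding k_def d_def by simp
  then have k: "0 < k" "k \<le> n" using n1 by (auto intro: Nat.gr0I)
  have "prime_elem h" using assms(3) by (rule field_poly_irreducible_imp_prime)
  then obtain g where g: "g \<noteq> 0" "h dvd monom 1 k - [:g:]"
    using prime_factor_xn1_dvd_binomial[OF _ h_dvd nk] unfolding d_def by auto
  have c_low: "\<forall>i\<ge>n. coeff c i = 0" using codeword_coeff_eq_0[OF c n1] by blast
  have "xn1 n dvd (monom 1 k - [:g:]) * c" using codeword_annihilated[OF c h_dvd g(2)] .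
  then have "\<And>i. i + k < n \<Longrightarrow> coeff c i = g * coeff c (i + k)"
    using coeff_quasi_periodic[OF k c_low] by blast
  then have "hamming_weight c = d * card {a. a < k \<and> coeff c a \<noteq> 0}"
    using hamming_weight_quasi_periodic[OF nk k(1) c_low g(1)] by blast
  then show "gcd (CARD('a) - 1) n dvd hamming_weight c" unfolding d_def by simp
qed

end
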